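(* Let $f\in P_{n,2k}$ be nonnegative on $\mathbb R^n$ and suppose $f(Ax)=f(x)$ for all $A\in J(n,v)$, for some $v\in\mathbb R^n$. Then $f$ is a sum of squares of forms (of degree $k$).
   Context: $P_{n,2k}$ is the space of real forms of degree $2k$ in $n$ variables. $J(n,v)=\{A\in SO(n):Av=v\}$. *)

theory Defs
  imports "HOL-Analysis.Analysis"
begin

definition exps :: "nat \<Rightarrow> ('n::finite \<Rightarrow> nat) set" where
  "exps d = {\<alpha>. (\<Sum>i\<in>UNIV. \<alpha> i) = d}"

text \<open>A real form (homogeneous polynomial) of degree d in n = CARD('n) variables,
  viewed as a function on real^'n.  P_{n,d} is the set of such functions.\<close>
definition is_form :: "nat \<Rightarrow> (real^'n::finite \<Rightarrow> real) \<Rightarrow> bool" where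
  "is_form d f \<longleftrightarrow> (\<exists>c :: ('n \<Rightarrow> nat) \<Rightarrow> real.
      \<forall>x. f x = (\<Sum>\<alpha>\<in>exps d. c \<alpha> * (\<Prod>i\<in>UNIV. (x $ i) ^ \<alpha> i)))"

definition SO :: "(real^'n^'n::finite) set" where
  "SO = {A. orthogonal_matrix A \<and> det A = 1}"

definition J :: "real^'n::finite \<Rightarrow> (real^'n^'n) set" where
  "J v = {A \<in> SO. A *v v = v}"

end

(*
  A nonnegative univariate real polynomial factors into nonnegative quadratics (x - a)^2 + b^2
  (real roots of even multiplicity, pairs of conjugate complex roots), so by Brahmagupta's
  identity it is a sum of two squares. Dehomogenising, the restriction of a nonnegative form f
  of degree 2k to a plane spanned by orthonormal w, u is B(s,t)^2 + C(s,t)^2 with binary forms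
  B, C of degree k; this settles n <= 2.

  For n >= 3 we may take v to be a unit vector u. With y = x - (u.x) u, J(u) acts transitively
  on each sphere |y| = r of the hyperplane orthogonal to u (a reflection mapping y to |y| w,
  corrected by a reflection fixing u and w if it reverses orientation). Hence
  f x = h(|y|, u.x) with h(s,t) = f(s w + t u) even in s. Writing B = E(s^2,t) + s O(s^2,t)
  and averaging over s = |y| and s = -|y| gives f = E_B^2 + |y|^2 O_B^2 + E_C^2 + |y|^2 O_C^2,
  and |y|^2 O^2 is the sum of the squares of the forms y_i O of degree k.
*)
theory Submission
  imports Defs "HOL-Computational_Algebra.Fundamental_Theorem_Algebra"
begin

section \<open>Nonnegative univariate polynomials\<close>

lemma poly_map_poly_of_real:
  "poly (map_poly of_real p) (of_real x) = (of_real (poly p x) :: 'a::{real_algebra_1,comm_ring_1})"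
  by (induction p) (auto simp: map_poly_pCons)

lemma map_poly_of_real_add:
  "map_poly of_real (p + q) =
    (map_poly of_real p + map_poly of_real q :: 'a::{real_algebra_1,comm_ring_1} poly)"
  by (rule poly_eqI) (simp add: coeff_map_poly)

lemma map_poly_of_real_mult:
  "map_poly of_real (p * q) =
    (map_poly of_real p * map_poly of_real q :: 'a::{real_algebra_1,comm_ring_1} poly)"
  by (rule poly_eqI) (simp add: coeff_map_poly coeff_mult)

lemma nonneg_poly_double_root:
  fixes p :: "real poly"
  assumes nonneg: "\<forall>x. poly p x \<ge> 0" and root: "poly p r = 0"
  shows "\<exists>s. p = [:-r, 1:]^2 * s \<and> (\<forall>x. poly s x \<ge> 0)"
proof -
  obtain p1 where p1: "p = [:-r, 1:] * p1"
    using root by (metis poly_eq_0_iff_dvd dvdE)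
  have "poly (pderiv p) r = 0"
    using DERIV_local_min[OF poly_DERIV zero_less_one] root nonneg by simp
  moreover have "poly (pderiv p) r = poly p1 r"
    by (simp only: p1 pderiv_mult poly_add poly_mult) (simp add: pderiv_pCons)
  ultimately obtain s where s: "p1 = [:-r, 1:] * s"
    by (metis poly_eq_0_iff_dvd dvdE)
  have p_eq: "poly p x = (x - r)^2 * poly s x" for x
    by (simp add: p1 s power2_eq_square algebra_simps)
  have off_root: "poly s x \<ge> 0" if "x \<noteq> r" for x
    using nonneg[rule_format, of x] that by (simp add: p_eq zero_le_mult_iff)
  have "poly s r \<ge> 0"
  proof (rule tendsto_lowerbound)
    show "(poly s \<longlongrightarrow> poly s r) (at r)"
      using poly_isCont isCont_def by blast
    show "\<forall>\<^sub>F x in at r. 0 \<le> poly s x"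
      using off_root by (auto simp: eventually_at_filter)
  qed simp
  with off_root have "\<forall>x. poly s x \<ge> 0" by metis
  moreover have "p = [:-r, 1:]^2 * s" by (simp only: p1 s power2_eq_square mult.assoc)
  ultimately show ?thesis by blast
qed

lemma degree_quadratic_sum_of_squares:
  "degree ([:-a, 1:]^2 + [:b:]^2 :: 'a::{idom,ring_char_0} poly) = 2"
  by (simp add: power2_eq_square numeral_2_eq_2 degree_add_eq_left)

lemma real_poly_dvd_by_conjugate_root_pair:
  fixes p :: "real poly"
  assumes root: "poly (map_poly of_real p) z = 0" and nonreal: "Im z \<noteq> 0"
  shows "[:-Re z, 1:]^2 + [:Im z:]^2 dvd p"
proof -
  define q where "q = [:-Re z, 1:]^2 + [:Im z:]^2"
  define m where "m = p mod q"
  have "degree q = 2"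
    by (simp add: q_def degree_quadratic_sum_of_squares)
  then have "degree m \<le> 1"
    using degree_mod_less[of q p] by (cases "q = 0") (auto simp: m_def)
  then have "m = [:coeff m 0, coeff m 1:]"
    by (intro poly_eqI) (auto simp: coeff_pCons coeff_eq_0 split: nat.split)
  then obtain m0 m1 where m: "m = [:m0, m1:]" by blast
  have "poly (map_poly of_real q) z = 0"
    by (simp add: q_def map_poly_pCons complex_eq_iff power2_eq_square algebra_simps)
  moreover have "p = q * (p div q) + m"
    by (simp add: m_def)
  then have "poly (map_poly of_real p) z =
      poly (map_poly of_real q) z * poly (map_poly of_real (p div q)) z +
      poly (map_poly of_real m) z"
    by (metis map_poly_of_real_add map_poly_of_real_mult poly_add poly_mult)
  ultimately have "poly (map_poly of_real m) z = 0"
    using root by simp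
  then have "of_real m0 + z * of_real m1 = 0"
    by (simp add: m map_poly_pCons)
  then have "m0 = 0 \<and> m1 = 0"
    using nonreal by (auto simp: complex_eq_iff)
  then have "m = 0"
    by (simp add: m)
  then show ?thesis
    by (simp add: m_def q_def mod_eq_0_iff_dvd)
qed

lemma nonneg_poly_quadratic_factor:
  fixes p :: "real poly"
  assumes nonneg: "\<forall>x. poly p x \<ge> 0" and "degree p > 0"
  shows "\<exists>a b s. p = ([:-a, 1:]^2 + [:b:]^2) * s \<and> (\<forall>x. poly s x \<ge> 0)"
proof (cases "\<exists>r. poly p r = 0")
  case True
  then obtain r s where "p = [:-r, 1:]^2 * s" "\<forall>x. poly s x \<ge> 0"
    using nonneg_poly_double_root[OF nonneg] by blast
  then show ?thesis
    by (intro exI[of _ r] exI[of _ 0] exI[of _ s]) simp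
next
  case no_real_root: False
  have "\<not> constant (poly (map_poly (of_real :: real \<Rightarrow> complex) p))"
    using \<open>degree p > 0\<close> by (simp add: constant_degree degree_map_poly)
  then obtain z :: complex where z: "poly (map_poly of_real p) z = 0"
    using fundamental_theorem_of_algebra by blast
  have "Im z \<noteq> 0"
  proof
    assume "Im z = 0"
    then have "z = of_real (Re z)"
      by (simp add: complex_eq_iff)
    then have "of_real (poly p (Re z)) = (0 :: complex)"
      using z poly_map_poly_of_real by metis
    then show False
      using no_real_root by simp
  qed
  define q where "q = [:-Re z, 1:]^2 + [:Im z:]^2"
  obtain s where s: "p = q * s"
    using real_poly_dvd_by_conjugate_root_pair[OF z \<open>Im z \<noteq> 0\<close>] by (auto simp: q_def)
  have q_pos: "poly q x > 0" for x
    using \<open>Im z \<noteq> 0\<close> by (simp add: q_def add_nonneg_pos)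
  have "poly s x \<ge> 0" for x
    using nonneg[rule_format, of x] q_pos[of x] by (simp add: s zero_le_mult_iff)
  then show ?thesis
    using s q_def by blast
qed

lemma nonneg_poly_sum_two_squares:
  fixes p :: "real poly"
  assumes "\<forall>x. poly p x \<ge> 0"
  shows "\<exists>A B. p = A^2 + B^2 \<and> 2 * degree A \<le> degree p \<and> 2 * degree B \<le> degree p"
  using assms
proof (induction "degree p" arbitrary: p rule: less_induct)
  case less
  show ?case
  proof (cases "degree p = 0")
    case True
    then obtain c where "p = [:c:]" by (metis degree_eq_zeroE)
    with less.prems have "p = [:sqrt c:]^2 + 0^2"
      by (auto simp: power2_eq_square)
    then show ?thesis by fastforce
  next
    case False
    then obtain a b s where p: "p = ([:-a, 1:]^2 + [:b:]^2) * s" and s: "\<forall>x. poly s x \<ge> 0"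
      using nonneg_poly_quadratic_factor less.prems by blast
    have "s \<noteq> 0" using False p by auto
    then have deg: "degree p = degree s + 2"
      by (simp add: p degree_mult_eq degree_quadratic_sum_of_squares)
    then obtain A B where s_eq: "s = A^2 + B^2"
      and A: "2 * degree A \<le> degree s" and B: "2 * degree B \<le> degree s"
      using less.hyps[of s] s by auto
    let ?A = "[:-a, 1:] * A - [:b:] * B" and ?B = "[:b:] * A + [:-a, 1:] * B"
    have "p = ?A^2 + ?B^2"
      unfolding p s_eq by algebra
    moreover have "2 * degree ?A \<le> degree p" "2 * degree ?B \<le> degree p"
      using degree_diff_le_max[of "[:-a, 1:] * A" "[:b:] * B"]
        degree_add_le_max[of "[:b:] * A" "[:-a, 1:] * B"]
        degree_mult_le[of "[:-a, 1:]" A] degree_mult_le[of "[:-a, 1:]" B]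
        degree_mult_le[of "[:b:]" A] degree_mult_le[of "[:b:]" B] A B deg
      by auto
    ultimately show ?thesis by blast
  qed
qed

section \<open>Forms\<close>

lemma finite_exps: "finite (exps d :: ('n::finite \<Rightarrow> nat) set)"
proof (rule finite_subset)
  show "exps d \<subseteq> {\<alpha>. \<forall>i. \<alpha> i \<le> d}"
    by (auto simp: exps_def intro: member_le_sum[of _ UNIV, simplified, THEN order.trans])
  show "finite {\<alpha>::'n \<Rightarrow> nat. \<forall>i. \<alpha> i \<le> d}"
    using finite_set_of_finite_funs[of "UNIV :: 'n set" "{..d}" 0] by simp
qed

lemma is_form_zero: "is_form d (\<lambda>x. 0)"
  unfolding is_form_def by (rule exI[of _ "\<lambda>_. 0"]) simp

lemma is_form_add:
  assumes "is_form d f" "is_form d g"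
  shows "is_form d (\<lambda>x. f x + g x)"
proof -
  obtain c e where "\<forall>x. f x = (\<Sum>\<alpha>\<in>exps d. c \<alpha> * (\<Prod>i\<in>UNIV. x $ i ^ \<alpha> i))"
    "\<forall>x. g x = (\<Sum>\<alpha>\<in>exps d. e \<alpha> * (\<Prod>i\<in>UNIV. x $ i ^ \<alpha> i))"
    using assms unfolding is_form_def by blast
  then show ?thesis
    unfolding is_form_def by (intro exI[of _ "\<lambda>\<alpha>. c \<alpha> + e \<alpha>"]) (simp add: sum.distrib distrib_right)
qed

lemma is_form_cmult:
  assumes "is_form d f"
  shows "is_form d (\<lambda>x. a * f x)"
proof -
  obtain c where "\<forall>x. f x = (\<Sum>\<alpha>\<in>exps d. c \<alpha> * (\<Prod>i\<in>UNIV. x $ i ^ \<alpha> i))"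
    using assms unfolding is_form_def by blast
  then show ?thesis
    unfolding is_form_def by (intro exI[of _ "\<lambda>\<alpha>. a * c \<alpha>"]) (simp add: sum_distrib_left mult.assoc)
qed

lemma is_form_const: "is_form 0 (\<lambda>x::real^'n::finite. a)"
proof -
  have "(exps 0 :: ('n \<Rightarrow> nat) set) = {\<lambda>_. 0}"
    by (auto simp: exps_def)
  then show ?thesis
    unfolding is_form_def by (intro exI[of _ "\<lambda>_. a"]) simp
qed

lemma is_form_component:
  fixes i :: "'n::finite"
  shows "is_form 1 (\<lambda>x. x $ i)"
proof -
  define \<delta> :: "'n \<Rightarrow> nat" where "\<delta> = (\<lambda>j. if j = i then 1 else 0 :: nat)"
  have "\<delta> \<in> exps 1"
    by (simp add: exps_def \<delta>_def)
  moreover have "(\<Prod>j\<in>UNIV. (x $ j) ^ \<delta> j) = x $ i" for x :: "real^'n"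
    by (simp add: \<delta>_def if_distrib[of "\<lambda>e. _ ^ e"] prod.If_cases)
  ultimately show ?thesis
    unfolding is_form_def
    by (intro exI[of _ "\<lambda>\<alpha>. if \<alpha> = \<delta> then 1 else 0"])
      (simp add: if_distrib[of "\<lambda>c. c * _"] finite_exps cong: if_cong)
qed

lemma is_form_mult:
  fixes f g :: "real^'n::finite \<Rightarrow> real"
  assumes "is_form a f" "is_form b g"
  shows "is_form (a + b) (\<lambda>x. f x * g x)"
proof -
  define mon :: "('n \<Rightarrow> nat) \<Rightarrow> real^'n \<Rightarrow> real"
    where "mon \<alpha> x = (\<Prod>i\<in>UNIV. (x $ i) ^ \<alpha> i)" for \<alpha> x
  obtain c e where c: "\<forall>x. f x = (\<Sum>\<alpha>\<in>exps a. c \<alpha> * mon \<alpha> x)"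
    and e: "\<forall>x. g x = (\<Sum>\<beta>\<in>exps b. e \<beta> * mon \<beta> x)"
    using assms unfolding is_form_def mon_def by blast
  define S :: "(('n \<Rightarrow> nat) \<times> ('n \<Rightarrow> nat)) set" where "S = exps a \<times> exps b"
  define add_exps :: "('n \<Rightarrow> nat) \<times> ('n \<Rightarrow> nat) \<Rightarrow> 'n \<Rightarrow> nat"
    where "add_exps p i = fst p i + snd p i" for p i
  define C where "C \<gamma> = (\<Sum>p\<in>{p \<in> S. add_exps p = \<gamma>}. c (fst p) * e (snd p))" for \<gamma>
  have "finite S"
    by (simp add: S_def finite_exps)
  have add_exps_S: "add_exps ` S \<subseteq> exps (a + b)"
    by (auto simp: S_def add_exps_def exps_def sum.distrib)
  have "f x * g x = (\<Sum>\<gamma>\<in>exps (a + b). C \<gamma> * mon \<gamma> x)" for x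
  proof -
    have "f x * g x = (\<Sum>\<alpha>\<in>exps a. \<Sum>\<beta>\<in>exps b. c \<alpha> * mon \<alpha> x * (e \<beta> * mon \<beta> x))"
      by (simp add: c e sum_product)
    also have "\<dots> = (\<Sum>p\<in>S. c (fst p) * e (snd p) * mon (add_exps p) x)"
      unfolding S_def sum.cartesian_product
      by (rule sum.cong) (auto simp: add_exps_def mon_def power_add prod.distrib)
    also have "\<dots> = (\<Sum>\<gamma>\<in>exps (a + b).
        \<Sum>p\<in>{p \<in> S. add_exps p = \<gamma>}. c (fst p) * e (snd p) * mon (add_exps p) x)"
      by (rule sum.group[OF \<open>finite S\<close> finite_exps add_exps_S, symmetric])
    also have "\<dots> = (\<Sum>\<gamma>\<in>exps (a + b). C \<gamma> * mon \<gamma> x)"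
      unfolding C_def sum_distrib_right by (intro sum.cong) auto
    finally show ?thesis .
  qed
  then show ?thesis
    unfolding is_form_def mon_def by blast
qed

lemma is_form_sum:
  "(\<And>i. i \<in> S \<Longrightarrow> is_form d (F i)) \<Longrightarrow> is_form d (\<lambda>x. \<Sum>i\<in>S. F i x)"
proof (induction S rule: infinite_finite_induct)
  case (insert a S)
  then show ?case by (simp add: is_form_add)
qed (simp_all add: is_form_zero)

lemma is_form_power: "is_form d f \<Longrightarrow> is_form (m * d) (\<lambda>x. f x ^ m)"
  by (induction m) (simp_all add: is_form_const is_form_mult)

lemma is_form_diff: "is_form d f \<Longrightarrow> is_form d g \<Longrightarrow> is_form d (\<lambda>x. f x - g x)"
  using is_form_add[of d f "\<lambda>x. -1 * g x"] is_form_cmult[of d g "-1"] by simp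

lemma is_form_inner: "is_form 1 (\<lambda>x::real^'n::finite. a \<bullet> x)"
  unfolding inner_vec_def inner_real_def by (intro is_form_sum is_form_cmult is_form_component)

lemma is_form_homogeneous:
  assumes "is_form d f"
  shows "f (c *\<^sub>R x) = c ^ d * f x"
proof -
  obtain co where co: "\<forall>x. f x = (\<Sum>\<alpha>\<in>exps d. co \<alpha> * (\<Prod>i\<in>UNIV. (x $ i) ^ \<alpha> i))"
    using assms unfolding is_form_def by blast
  have "(\<Prod>i\<in>UNIV. (c * x $ i) ^ \<alpha> i) = c ^ d * (\<Prod>i\<in>UNIV. (x $ i) ^ \<alpha> i)" if "\<alpha> \<in> exps d" for \<alpha>
  proof -
    have "(\<Prod>i\<in>UNIV. c ^ \<alpha> i) = c ^ d"
      using that by (simp add: exps_def power_sum[symmetric])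
    then show ?thesis
      by (simp add: power_mult_distrib prod.distrib)
  qed
  then show ?thesis
    by (simp add: co sum_distrib_left mult.left_commute)
qed

lemma is_form_continuous: "is_form d f \<Longrightarrow> continuous_on UNIV f"
  unfolding is_form_def by (auto intro!: continuous_intros)

lemma is_form_restrict_to_line:
  fixes f :: "real^'n::finite \<Rightarrow> real"
  assumes "is_form d f"
  shows "\<exists>P. (\<forall>s. f (s *\<^sub>R w + u) = poly P s) \<and> degree P \<le> d"
proof -
  obtain co where co: "\<forall>x. f x = (\<Sum>\<alpha>\<in>exps d. co \<alpha> * (\<Prod>i\<in>UNIV. (x $ i) ^ \<alpha> i))"
    using assms unfolding is_form_def by blast
  define P where "P = (\<Sum>\<alpha>\<in>exps d. smult (co \<alpha>) (\<Prod>i\<in>UNIV. [:u $ i, w $ i:] ^ \<alpha> i))"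
  have "f (s *\<^sub>R w + u) = poly P s" for s
    by (simp add: P_def co poly_sum poly_prod algebra_simps)
  moreover have "degree P \<le> d"
    unfolding P_def
  proof (rule degree_sum_le[OF finite_exps])
    fix \<alpha> :: "'n \<Rightarrow> nat"
    assume "\<alpha> \<in> exps d"
    have "degree (smult (co \<alpha>) (\<Prod>i\<in>UNIV. [:u $ i, w $ i:] ^ \<alpha> i)) \<le>
        degree (\<Prod>i\<in>UNIV. [:u $ i, w $ i:] ^ \<alpha> i)"
      by (rule degree_smult_le)
    also have "\<dots> \<le> (\<Sum>i\<in>UNIV. degree ([:u $ i, w $ i:] ^ \<alpha> i))"
      using degree_prod_sum_le[of UNIV "\<lambda>i. [:u $ i, w $ i:] ^ \<alpha> i"] by (simp add: o_def)
    also have "\<dots> \<le> (\<Sum>i\<in>UNIV. \<alpha> i)"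
      by (intro sum_mono order.trans[OF degree_power_le]) (simp add: degree_pCons_le)
    finally show "degree (smult (co \<alpha>) (\<Prod>i\<in>UNIV. [:u $ i, w $ i:] ^ \<alpha> i)) \<le> d"
      using \<open>\<alpha> \<in> exps d\<close> by (simp add: exps_def)
  qed
  ultimately show ?thesis by blast
qed

section \<open>Binary forms\<close>

definition binary_form :: "nat \<Rightarrow> (nat \<Rightarrow> real) \<Rightarrow> real \<Rightarrow> real \<Rightarrow> real" where
  "binary_form k b s t = (\<Sum>j\<le>k. b j * s ^ j * t ^ (k - j))"

lemma binary_form_dehomogenize:
  assumes "degree A \<le> k" "t \<noteq> 0"
  shows "t ^ k * poly A (s / t) = binary_form k (coeff A) s t"
proof -
  have "poly A (s / t) = (\<Sum>j\<le>k. coeff A j * (s / t) ^ j)"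
    unfolding poly_altdef using assms(1) by (intro sum.mono_neutral_left) (auto simp: coeff_eq_0)
  also have "t ^ k * \<dots> = (\<Sum>j\<le>k. coeff A j * s ^ j * t ^ (k - j))"
    unfolding sum_distrib_left
  proof (rule sum.cong[OF refl])
    fix j
    assume "j \<in> {..k}"
    then have "t ^ k = t ^ j * t ^ (k - j)"
      by (simp add: power_add[symmetric])
    then show "t ^ k * (coeff A j * (s / t) ^ j) = coeff A j * s ^ j * t ^ (k - j)"
      using assms(2) by (simp add: power_divide field_simps)
  qed
  finally show ?thesis
    by (simp add: binary_form_def)
qed

lemma nonneg_form_on_plane_sum_two_squares:
  fixes f :: "real^'n::finite \<Rightarrow> real"
  assumes form: "is_form (2 * k) f" and nonneg: "\<forall>x. f x \<ge> 0"
  shows "\<exists>b c. \<forall>s t. f (s *\<^sub>R w + t *\<^sub>R u) = (binary_form k b s t)^2 + (binary_form k c s t)^2"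
proof -
  obtain P where P: "\<forall>s. f (s *\<^sub>R w + u) = poly P s" "degree P \<le> 2 * k"
    using is_form_restrict_to_line[OF form] by blast
  obtain A B where AB: "P = A^2 + B^2" "2 * degree A \<le> degree P" "2 * degree B \<le> degree P"
    using nonneg_poly_sum_two_squares[of P] P nonneg by metis
  define R where "R s t = (binary_form k (coeff A) s t)^2 + (binary_form k (coeff B) s t)^2" for s t
  have off_axis: "f (s *\<^sub>R w + t *\<^sub>R u) = R s t" if "t \<noteq> 0" for s t
  proof -
    have "f (s *\<^sub>R w + t *\<^sub>R u) = f (t *\<^sub>R ((s / t) *\<^sub>R w + u))"
      using that by (simp add: scaleR_add_right)
    also have "\<dots> = t ^ (2 * k) * poly P (s / t)"
      by (simp add: is_form_homogeneous[OF form] P)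
    also have "\<dots> = (t ^ k * poly A (s / t))^2 + (t ^ k * poly B (s / t))^2"
      by (simp add: AB power_mult_distrib power_mult[symmetric] algebra_simps)
    also have "\<dots> = R s t"
      using AB P that by (simp add: R_def binary_form_dehomogenize)
    finally show ?thesis .
  qed
  have "f (s *\<^sub>R w + t *\<^sub>R u) - R s t = 0" for s t
  proof (rule continuous_constant_on_closure[of "- {0}" "\<lambda>t. f (s *\<^sub>R w + t *\<^sub>R u) - R s t"])
    show "continuous_on (closure (- {0})) (\<lambda>t. f (s *\<^sub>R w + t *\<^sub>R u) - R s t)"
      using is_form_continuous[OF form]
      by (auto simp: R_def binary_form_def
          intro!: continuous_intros continuous_on_compose2[of UNIV f])
  qed (auto simp: off_axis closure_complement)
  then show ?thesis
    unfolding R_def by auto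
qed

lemma is_form_binary_form:
  assumes "is_form 1 p" "is_form 1 q"
  shows "is_form k (\<lambda>x. binary_form k b (p x) (q x))"
  unfolding binary_form_def
proof (rule is_form_sum)
  fix j
  assume "j \<in> {..k}"
  have "is_form (j * 1 + (k - j) * 1) (\<lambda>x. b j * p x ^ j * q x ^ (k - j))"
    by (intro is_form_mult is_form_cmult is_form_power assms)
  then show "is_form k (\<lambda>x. b j * p x ^ j * q x ^ (k - j))"
    using \<open>j \<in> {..k}\<close> by simp
qed

definition binary_form_even :: "nat \<Rightarrow> (nat \<Rightarrow> real) \<Rightarrow> real \<Rightarrow> real \<Rightarrow> real" where
  "binary_form_even k b \<rho> t = (\<Sum>j\<le>k. if even j then b j * \<rho> ^ (j div 2) * t ^ (k - j) else 0)"

definition binary_form_odd :: "nat \<Rightarrow> (nat \<Rightarrow> real) \<Rightarrow> real \<Rightarrow> real \<Rightarrow> real" where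
  "binary_form_odd k b \<rho> t = (\<Sum>j\<le>k. if odd j then b j * \<rho> ^ (j div 2) * t ^ (k - j) else 0)"

lemma binary_form_even_odd:
  "binary_form k b r t = binary_form_even k b (r^2) t + r * binary_form_odd k b (r^2) t"
proof -
  have "b j * r ^ j * t ^ (k - j) =
      (if even j then b j * (r^2) ^ (j div 2) * t ^ (k - j) else 0) +
      r * (if odd j then b j * (r^2) ^ (j div 2) * t ^ (k - j) else 0)" for j
    by (cases "even j") (auto elim!: evenE oddE simp: power_mult power_add)
  then show ?thesis
    by (simp add: binary_form_def binary_form_even_def binary_form_odd_def
        sum.distrib sum_distrib_left)
qed

lemma binary_form_squares_symmetrize:
  "(binary_form k b r t)^2 + (binary_form k b (-r) t)^2 =
     2 * ((binary_form_even k b (r^2) t)^2 + r^2 * (binary_form_odd k b (r^2) t)^2)"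
  unfolding binary_form_even_odd[of k b r t] binary_form_even_odd[of k b "-r" t]
  by (simp add: power2_eq_square algebra_simps)

lemma is_form_binary_form_even:
  assumes "is_form 2 \<rho>" "is_form 1 q"
  shows "is_form k (\<lambda>x. binary_form_even k b (\<rho> x) (q x))"
  unfolding binary_form_even_def
proof (rule is_form_sum)
  fix j
  assume "j \<in> {..k}"
  have form: "is_form ((j div 2) * 2 + (k - j) * 1) (\<lambda>x. b j * \<rho> x ^ (j div 2) * q x ^ (k - j))"
    by (intro is_form_mult is_form_cmult is_form_power assms)
  show "is_form k (\<lambda>x. if even j then b j * \<rho> x ^ (j div 2) * q x ^ (k - j) else 0)"
  proof (cases "even j")
    case True
    then have "(j div 2) * 2 + (k - j) * 1 = k"
      using \<open>j \<in> {..k}\<close> by (auto elim: evenE)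
    then show ?thesis
      using form True by (simp only: if_True not_False_eq_True)
  qed (simp add: is_form_zero)
qed

lemma is_form_mult_binary_form_odd:
  assumes "is_form 1 l" "is_form 2 \<rho>" "is_form 1 q"
  shows "is_form k (\<lambda>x. l x * binary_form_odd k b (\<rho> x) (q x))"
  unfolding binary_form_odd_def sum_distrib_left
proof (rule is_form_sum)
  fix j
  assume "j \<in> {..k}"
  have form: "is_form (1 + ((j div 2) * 2 + (k - j) * 1))
      (\<lambda>x. l x * (b j * \<rho> x ^ (j div 2) * q x ^ (k - j)))"
    by (intro is_form_mult is_form_cmult is_form_power assms)
  show "is_form k (\<lambda>x. l x * (if odd j then b j * \<rho> x ^ (j div 2) * q x ^ (k - j) else 0))"
  proof (cases "odd j")
    case True
    then have "1 + ((j div 2) * 2 + (k - j) * 1) = k"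
      using \<open>j \<in> {..k}\<close> by (auto elim: oddE)
    then show ?thesis
      using form True by (simp only: if_True not_False_eq_True)
  qed (simp add: is_form_zero)
qed

section \<open>Sums of squares of forms\<close>

definition sos_of_forms :: "nat \<Rightarrow> (real^'n::finite \<Rightarrow> real) \<Rightarrow> bool" where
  "sos_of_forms k f \<longleftrightarrow> (\<exists>gs. (\<forall>g\<in>set gs. is_form k g) \<and> f = (\<lambda>x. \<Sum>g\<leftarrow>gs. (g x)^2))"

lemma sos_of_forms_zero: "sos_of_forms k (\<lambda>x. 0)"
  unfolding sos_of_forms_def by (intro exI[of _ "[]"]) simp

lemma sos_of_forms_square: "is_form k g \<Longrightarrow> sos_of_forms k (\<lambda>x. (g x)^2)"
  unfolding sos_of_forms_def by (intro exI[of _ "[g]"]) simp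

lemma sos_of_forms_add:
  assumes "sos_of_forms k f" "sos_of_forms k g"
  shows "sos_of_forms k (\<lambda>x. f x + g x)"
proof -
  obtain fs gs where "\<forall>h\<in>set fs. is_form k h" "f = (\<lambda>x. \<Sum>h\<leftarrow>fs. (h x)^2)"
    "\<forall>h\<in>set gs. is_form k h" "g = (\<lambda>x. \<Sum>h\<leftarrow>gs. (h x)^2)"
    using assms unfolding sos_of_forms_def by blast
  then show ?thesis
    unfolding sos_of_forms_def by (intro exI[of _ "fs @ gs"]) auto
qed

lemma sos_of_forms_sum_squares:
  "(\<And>i. i \<in> S \<Longrightarrow> is_form k (q i)) \<Longrightarrow> sos_of_forms k (\<lambda>x. \<Sum>i\<in>S. (q i x)^2)"
proof (induction S rule: infinite_finite_induct)
  case (insert i S)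
  then show ?case by (simp add: sos_of_forms_add sos_of_forms_square)
qed (simp_all add: sos_of_forms_zero)

lemma sos_of_forms_indexed:
  assumes "sos_of_forms k f"
  shows "\<exists>m (g :: nat \<Rightarrow> real^'n::finite \<Rightarrow> real).
           (\<forall>i<m. is_form k (g i)) \<and> (\<forall>x. f x = (\<Sum>i<m. (g i x)^2))"
proof -
  obtain gs where "\<forall>g\<in>set gs. is_form k g" "f = (\<lambda>x. \<Sum>g\<leftarrow>gs. (g x)^2)"
    using assms unfolding sos_of_forms_def by blast
  then show ?thesis
    by (intro exI[of _ "length gs"] exI[of _ "nth gs"])
      (auto simp: sum_list_sum_nth atLeast0LessThan)
qed

section \<open>Orthogonal matrices and the stabiliser J\<close>

lemma orthogonal_matrix_column_inner:
  fixes Q :: "real^'n^'n"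
  assumes "orthogonal_matrix Q"
  shows "column i Q \<bullet> column j Q = (if i = j then 1 else 0)"
  using assms orthogonal_matrix_orthonormal_columns[of Q]
  by (auto simp: orthogonal_def norm_eq_1)

lemma orthogonal_matrix_column_expansion:
  fixes Q :: "real^'n^'n"
  assumes "orthogonal_matrix Q"
  shows "x = (\<Sum>i\<in>UNIV. (column i Q \<bullet> x) *\<^sub>R column i Q)"
proof -
  have "Q ** transpose Q = mat 1"
    using assms by (simp add: orthogonal_matrix_def)
  then have "x = Q *v (transpose Q *v x)"
    by (simp only: matrix_vector_mul_assoc matrix_vector_mul_lid)
  also have "\<dots> = (\<Sum>i\<in>UNIV. (transpose Q *v x) $ i *s column i Q)"
    by (rule matrix_mult_sum)
  also have "\<dots> = (\<Sum>i\<in>UNIV. (column i Q \<bullet> x) *\<^sub>R column i Q)"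
    by (simp add: matrix_vector_mult_def transpose_def column_def inner_vec_def mult.commute
        scalar_mult_eq_scaleR)
  finally show ?thesis .
qed

lemma orthogonal_matrix_reflect_column:
  fixes Q :: "real^'n^'n"
  assumes Q: "orthogonal_matrix Q"
  shows "\<exists>F. orthogonal_matrix F \<and> det F = -1 \<and> (\<forall>m. m \<noteq> l \<longrightarrow> F *v column m Q = column m Q)"
proof -
  define D :: "real^'n^'n" where "D = (\<chi> a b. if a = b then (if a = l then -1 else 1) else 0)"
  have "transpose D = D" "D ** D = mat 1"
    by (auto simp: D_def transpose_def matrix_matrix_mult_def mat_def vec_eq_iff
        if_distrib[of "\<lambda>c. c * _"] sum.delta cong: if_cong)
  then have "orthogonal_matrix D"
    by (simp add: orthogonal_matrix_def)
  have "det D = -1"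
    by (simp add: det_diagonal D_def prod.delta)
  have D_fix: "D *v axis m 1 = axis m 1" if "m \<noteq> l" for m
    using that by (auto simp: D_def matrix_vector_mult_def axis_def vec_eq_iff
        if_distrib[of "\<lambda>c. c * _"] sum.delta cong: if_cong)
  define F where "F = Q ** D ** transpose Q"
  have "orthogonal_matrix F"
    unfolding F_def using Q \<open>orthogonal_matrix D\<close>
    by (intro orthogonal_matrix_mul) (auto simp: orthogonal_matrix_transpose)
  moreover have "det F = -1"
    using det_orthogonal_matrix[OF Q] \<open>det D = -1\<close> by (auto simp: F_def det_mul det_transpose)
  moreover have "F *v column m Q = column m Q" if "m \<noteq> l" for m
  proof -
    have "F *v (Q *v axis m 1) = Q *v (D *v ((transpose Q ** Q) *v axis m 1))"
      unfolding F_def by (simp add: matrix_vector_mul_assoc matrix_mul_assoc)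
    also have "\<dots> = Q *v axis m 1"
      using Q D_fix[OF that] by (simp add: orthogonal_matrix_def)
    finally show ?thesis
      by (simp add: matrix_vector_mult_basis)
  qed
  ultimately show ?thesis by blast
qed

lemma orthogonal_matrix_swap_equal_norm:
  fixes y z :: "real^'n"
  assumes "norm y = norm z"
  shows "\<exists>M. orthogonal_matrix M \<and> M *v y = z \<and> (\<forall>v. v \<bullet> y = 0 \<longrightarrow> v \<bullet> z = 0 \<longrightarrow> M *v v = v)"
proof -
  define a where "a = y - z"
  define \<kappa> where "\<kappa> = 2 / (a \<bullet> a)"
  define H where "H v = v - ((a \<bullet> v) * \<kappa>) *\<^sub>R a" for v
  have "linear H"
    by (rule linearI) (simp_all add: H_def inner_add_right algebra_simps scaleR_add_left)
  moreover have "H v \<bullet> H v' = v \<bullet> v'" for v v'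
  proof (cases "a = 0")
    case False
    then have "\<kappa> * \<kappa> * (a \<bullet> a) = 2 * \<kappa>"
      by (simp add: \<kappa>_def field_simps)
    moreover have "H v \<bullet> H v' =
        v \<bullet> v' - 2 * \<kappa> * (a \<bullet> v) * (a \<bullet> v') + (\<kappa> * \<kappa> * (a \<bullet> a)) * (a \<bullet> v) * (a \<bullet> v')"
      by (simp add: H_def inner_diff_left inner_diff_right inner_commute algebra_simps)
    ultimately show ?thesis by simp
  qed (simp add: H_def)
  ultimately have "orthogonal_transformation H"
    by (simp add: orthogonal_transformation_def)
  then have "orthogonal_matrix (matrix H)"
    by (simp add: orthogonal_transformation_matrix)
  have "y \<bullet> y = z \<bullet> z"
    using assms by (simp add: power2_norm_eq_inner[symmetric])
  then have aa: "a \<bullet> a = 2 * (a \<bullet> y)"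
    by (simp add: a_def inner_diff_left inner_diff_right inner_commute)
  have "H y = z"
  proof (cases "a = 0")
    case False
    then have "a \<bullet> a \<noteq> 0"
      by simp
    then have "(a \<bullet> y) * \<kappa> = 1"
      using aa by (simp add: \<kappa>_def)
    then show ?thesis
      by (simp add: H_def a_def)
  qed (simp add: H_def a_def)
  moreover have "H v = v" if "v \<bullet> y = 0" "v \<bullet> z = 0" for v
    using that by (simp add: H_def a_def inner_diff_left inner_diff_right inner_commute)
  moreover have "matrix H *v v = H v" for v
    using matrix_vector_mul(2)[OF \<open>linear H\<close>] by metis
  ultimately show ?thesis
    using \<open>orthogonal_matrix (matrix H)\<close> by metis
qed

lemma J_orbit_meets_plane:
  fixes u w :: "real^'n"
  assumes u: "u \<bullet> u = 1" and w: "w \<bullet> w = 1" and uw: "u \<bullet> w = 0"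
    and F: "orthogonal_matrix F" "det F = -1" "F *v u = u" "F *v w = w"
  shows "\<exists>A\<in>J u. A *v x = norm (x - (u \<bullet> x) *\<^sub>R u) *\<^sub>R w + (u \<bullet> x) *\<^sub>R u"
proof -
  define y where "y = x - (u \<bullet> x) *\<^sub>R u"
  have "u \<bullet> y = 0"
    using u by (simp add: y_def inner_diff_right)
  have "norm y = norm (norm y *\<^sub>R w)"
    using w by (simp add: norm_eq_1)
  then obtain M where M: "orthogonal_matrix M" "M *v y = norm y *\<^sub>R w" and "M *v u = u"
    using orthogonal_matrix_swap_equal_norm \<open>u \<bullet> y = 0\<close> uw
    by (metis inner_commute inner_scaleR_right mult_zero_right)
  have "M *v x = M *v (y + (u \<bullet> x) *\<^sub>R u)"
    by (simp add: y_def)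
  also have "\<dots> = M *v y + (u \<bullet> x) *\<^sub>R (M *v u)"
    by (simp add: matrix_vector_right_distrib matrix_vector_mult_scaleR)
  finally have Mx: "M *v x = norm y *\<^sub>R w + (u \<bullet> x) *\<^sub>R u"
    using M \<open>M *v u = u\<close> by simp
  show ?thesis
  proof (cases "det M = 1")
    case True
    then have "M \<in> J u"
      using M \<open>M *v u = u\<close> by (simp add: J_def SO_def)
    then show ?thesis
      using Mx y_def by blast
  next
    case False
    then have "det M = -1"
      using det_orthogonal_matrix[OF M(1)] by auto
    then have "F ** M \<in> J u"
      using F M \<open>M *v u = u\<close>
      by (simp add: J_def SO_def det_mul orthogonal_matrix_mul matrix_vector_mul_assoc[symmetric])
    moreover have "(F ** M) *v x = norm y *\<^sub>R w + (u \<bullet> x) *\<^sub>R u"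
      using Mx F
      by (simp add: matrix_vector_mul_assoc[symmetric] matrix_vector_right_distrib
          matrix_vector_mult_scaleR)
    ultimately show ?thesis
      using y_def by blast
  qed
qed

lemma J_subset_J_scaleR: "J u \<subseteq> J (c *\<^sub>R u)"
  by (auto simp: J_def matrix_vector_mult_scaleR)

section \<open>Invariant nonnegative forms\<close>

lemma sos_of_forms_if_plane:
  fixes f :: "real^'n::finite \<Rightarrow> real" and u w :: "real^'n"
  assumes form: "is_form (2 * k) f" and nonneg: "\<forall>x. f x \<ge> 0"
    and plane: "\<forall>x. x = (w \<bullet> x) *\<^sub>R w + (u \<bullet> x) *\<^sub>R u"
  shows "sos_of_forms k f"
proof -
  obtain b c
    where bc: "\<forall>s t. f (s *\<^sub>R w + t *\<^sub>R u) = (binary_form k b s t)^2 + (binary_form k c s t)^2"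
    using nonneg_form_on_plane_sum_two_squares[OF form nonneg] by blast
  have "f = (\<lambda>x. (binary_form k b (w \<bullet> x) (u \<bullet> x))^2 + (binary_form k c (w \<bullet> x) (u \<bullet> x))^2)"
  proof
    fix x
    show "f x = (binary_form k b (w \<bullet> x) (u \<bullet> x))^2 + (binary_form k c (w \<bullet> x) (u \<bullet> x))^2"
      using arg_cong[of _ _ f, OF plane[rule_format, of x]] bc by simp
  qed
  then show ?thesis
    by (simp only:) (intro sos_of_forms_add sos_of_forms_square is_form_binary_form is_form_inner)
qed

lemma sos_of_forms_if_J_invariant:
  fixes f :: "real^'n::finite \<Rightarrow> real"
  assumes form: "is_form (2 * k) f" and nonneg: "\<forall>x. f x \<ge> 0"
    and u: "u \<bullet> u = 1" and w: "w \<bullet> w = 1" and uw: "u \<bullet> w = 0"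
    and F: "orthogonal_matrix F" "det F = -1" "F *v u = u" "F *v w = w"
    and invariant: "\<forall>A\<in>J u. \<forall>x. f (A *v x) = f x"
  shows "sos_of_forms k f"
proof -
  define h where "h s t = f (s *\<^sub>R w + t *\<^sub>R u)" for s t
  define y where "y x = x - (u \<bullet> x) *\<^sub>R u" for x
  have radial: "f x = h (norm (y x)) (u \<bullet> x)" for x
    using J_orbit_meets_plane[OF u w uw F, of x] invariant by (metis h_def y_def)
  have "h s t = h \<bar>s\<bar> t" for s t
    using radial[of "s *\<^sub>R w + t *\<^sub>R u"] u w uw
    by (simp add: h_def y_def inner_add_right inner_commute norm_eq_1[symmetric])
  then have h_even: "h (-s) t = h s t" for s t
    by (metis abs_minus_cancel)
  obtain b c where bc: "\<And>s t. h s t = (binary_form k b s t)^2 + (binary_form k c s t)^2"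
    using nonneg_form_on_plane_sum_two_squares[OF form nonneg] unfolding h_def by blast
  define \<rho> where "\<rho> x = (\<Sum>i\<in>UNIV. (y x $ i)^2)" for x
  have rho_norm: "\<rho> x = (norm (y x))^2" for x
    unfolding \<rho>_def power2_norm_eq_inner by (simp add: inner_vec_def power2_eq_square)
  have form_y: "is_form 1 (\<lambda>x. y x $ i)" for i
  proof -
    have "is_form 1 (\<lambda>x. x $ i - u $ i * (u \<bullet> x))"
      by (intro is_form_diff is_form_component is_form_cmult is_form_inner)
    then show ?thesis
      by (simp add: y_def mult.commute)
  qed
  have form_rho: "is_form 2 \<rho>"
    unfolding \<rho>_def using is_form_power[OF form_y, of 2] by (intro is_form_sum) simp
  define Ev where "Ev b x = binary_form_even k b (\<rho> x) (u \<bullet> x)" for b x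
  define Od where "Od b x = binary_form_odd k b (\<rho> x) (u \<bullet> x)" for b x
  have "f = (\<lambda>x. (Ev b x)^2 + (\<Sum>i\<in>UNIV. (y x $ i * Od b x)^2) +
                 ((Ev c x)^2 + (\<Sum>i\<in>UNIV. (y x $ i * Od c x)^2)))"
  proof
    fix x
    have "2 * f x = h (norm (y x)) (u \<bullet> x) + h (- norm (y x)) (u \<bullet> x)"
      using radial h_even by simp
    also have "\<dots> = 2 * ((Ev b x)^2 + \<rho> x * (Od b x)^2) + 2 * ((Ev c x)^2 + \<rho> x * (Od c x)^2)"
      using binary_form_squares_symmetrize[of k _ "norm (y x)" "u \<bullet> x"]
      by (simp add: bc Ev_def Od_def rho_norm algebra_simps)
    finally show "f x = (Ev b x)^2 + (\<Sum>i\<in>UNIV. (y x $ i * Od b x)^2) +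
                        ((Ev c x)^2 + (\<Sum>i\<in>UNIV. (y x $ i * Od c x)^2))"
      by (simp add: \<rho>_def power_mult_distrib sum_distrib_right)
  qed
  then show ?thesis
    unfolding Ev_def Od_def
    by (simp only:) (intro sos_of_forms_add sos_of_forms_square sos_of_forms_sum_squares
        is_form_binary_form_even is_form_mult_binary_form_odd form_y form_rho is_form_inner)
qed

lemma exists_unit_J_subset: "\<exists>u. norm u = 1 \<and> J u \<subseteq> J (v :: real^'n::finite)"
proof (cases "v = 0")
  case True
  have "J (axis undefined 1) \<subseteq> J (0 *\<^sub>R axis undefined 1)"
    by (rule J_subset_J_scaleR)
  then show ?thesis
    using True by (intro exI[of _ "axis undefined 1"]) simp
next
  case False
  then show ?thesis
    using J_subset_J_scaleR[of "v /\<^sub>R norm v" "norm v"] by (intro exI[of _ "v /\<^sub>R norm v"]) simp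
qed

lemma UNIV_two_elements_or_three_distinct:
  obtains (two) j where "(UNIV :: 'a set) = {k, j}"
  | (three) j l where "j \<noteq> k" "l \<noteq> k" "j \<noteq> (l :: 'a)"
proof (cases "\<exists>j l. j \<noteq> k \<and> l \<noteq> k \<and> j \<noteq> l")
  case False
  show ?thesis
  proof (cases "\<exists>j. j \<noteq> k")
    case True
    then obtain j where "j \<noteq> k" by blast
    then have "UNIV = {k, j}"
      using False by blast
    then show ?thesis by (rule two)
  next
    case False
    then have "UNIV = {k, k}" by auto
    then show ?thesis by (rule two)
  qed
qed (use three in blast)

lemma orthogonal_matrix_plane_expansion:
  fixes Q :: "real^'n^'n"
  assumes Q: "orthogonal_matrix Q" and two: "(UNIV :: 'n set) = {k, j}"
  shows "\<exists>w. \<forall>x. x = (w \<bullet> x) *\<^sub>R w + (column k Q \<bullet> x) *\<^sub>R column k Q"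
proof (cases "j = k")
  case True
  have "x = (0 \<bullet> x) *\<^sub>R 0 + (column k Q \<bullet> x) *\<^sub>R column k Q" for x
  proof -
    have "x = (\<Sum>i\<in>UNIV. (column i Q \<bullet> x) *\<^sub>R column i Q)"
      by (rule orthogonal_matrix_column_expansion[OF Q])
    also have "\<dots> = (0 \<bullet> x) *\<^sub>R 0 + (column k Q \<bullet> x) *\<^sub>R column k Q"
      by (simp add: two True)
    finally show ?thesis .
  qed
  then show ?thesis by blast
next
  case False
  have "x = (column j Q \<bullet> x) *\<^sub>R column j Q + (column k Q \<bullet> x) *\<^sub>R column k Q" for x
  proof -
    have "x = (\<Sum>i\<in>UNIV. (column i Q \<bullet> x) *\<^sub>R column i Q)"
      by (rule orthogonal_matrix_column_expansion[OF Q])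
    also have "\<dots> = (column j Q \<bullet> x) *\<^sub>R column j Q + (column k Q \<bullet> x) *\<^sub>R column k Q"
      using False by (simp add: two add.commute)
    finally show ?thesis .
  qed
  then show ?thesis by blast
qed

lemma sos_of_forms_if_J_invariant_basis:
  fixes f :: "real^'n::finite \<Rightarrow> real" and Q :: "real^'n^'n"
  assumes form: "is_form (2 * k) f" and nonneg: "\<forall>x. f x \<ge> 0"
    and Q: "orthogonal_matrix Q" and distinct: "j \<noteq> i" "l \<noteq> i" "j \<noteq> l"
    and invariant: "\<forall>A\<in>J (column i Q). \<forall>x. f (A *v x) = f x"
  shows "sos_of_forms k f"
proof -
  obtain F where F: "orthogonal_matrix F" "det F = -1" "\<forall>m. m \<noteq> l \<longrightarrow> F *v column m Q = column m Q"
    using orthogonal_matrix_reflect_column[OF Q] by blast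
  then have "F *v column i Q = column i Q" "F *v column j Q = column j Q"
    using distinct by auto
  moreover have "column i Q \<bullet> column i Q = 1" "column j Q \<bullet> column j Q = 1"
    "column i Q \<bullet> column j Q = 0"
    using orthogonal_matrix_column_inner[OF Q] distinct by simp_all
  ultimately show ?thesis
    using sos_of_forms_if_J_invariant[OF form nonneg _ _ _ F(1,2) _ _ invariant] by blast
qed

theorem lemma6p3:
  fixes f :: "real^'n::finite \<Rightarrow> real" and v :: "real^'n" and k :: nat
  assumes "is_form (2*k) f"
    and "\<forall>x. f x \<ge> 0"
    and "\<forall>A\<in>J v. \<forall>x. f (A *v x) = f x"
  shows "\<exists>m (g :: nat \<Rightarrow> real^'n \<Rightarrow> real).
           (\<forall>i<m. is_form k (g i)) \<and> (\<forall>x. f x = (\<Sum>i<m. (g i x)^2))"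
proof -
  obtain u where "norm u = 1" and "J u \<subseteq> J v"
    using exists_unit_J_subset by blast
  then have invariant: "\<forall>A\<in>J u. \<forall>x. f (A *v x) = f x"
    using assms(3) by blast
  fix i :: 'n
  obtain Q where Q: "orthogonal_matrix Q" and "Q *v axis i 1 = u"
    using orthogonal_matrix_exists_basis[OF \<open>norm u = 1\<close>] by blast
  then have u: "column i Q = u"
    by (simp add: matrix_vector_mult_basis)
  have "sos_of_forms k f"
  proof (cases rule: UNIV_two_elements_or_three_distinct[of i])
    case (two j)
    obtain w where "\<forall>x. x = (w \<bullet> x) *\<^sub>R w + (u \<bullet> x) *\<^sub>R u"
      using orthogonal_matrix_plane_expansion[OF Q two, unfolded u] by blast
    then show ?thesis
      by (rule sos_of_forms_if_plane[OF assms(1,2)])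
  next
    case (three j l)
    then show ?thesis
      using sos_of_forms_if_J_invariant_basis[OF assms(1,2) Q] invariant u by blast
  qed
  then show ?thesis
    by (rule sos_of_forms_indexed)
qed

end
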